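(* Let $r, J, L \ge 1$ be integers. Let $\mathbf{H}(X) = [h_{j,l}(X)]_{j \in [J], l \in [L]}$ be a $J \times L$ matrix whose entries are elements of $\mathbb{F}_2[X]/\langle X^r - 1\rangle$, each of which is either $0$, a monomial $X^{a}$, or a binomial $X^{a} + X^{b}$ with $a \not\equiv b \pmod r$. Let $H$ be the associated $Jr \times Lr$ binary parity-check matrix, and assume that $H$ has constant column weight and constant row weight. For each $j,l$ let $E_{j,l} \subseteq \mathbb{Z}_r$ be the set of exponents occurring in $h_{j,l}(X)$ (empty, one element, or two elements respectively). For $i, j \in [J]$ let $\mathbf{d}_{ij}$ be the multiset $\{(e - e') \bmod r : l \in [L],\ e \in E_{i,l},\ e' \in E_{j,l}\}$ (pairs with $e=e'$ when $i=j$ included). Then the code $C(H)$ is dual-containing if and only if $\mathbf{d}_{ij}$ is multiplicity even for all $i, j \in [J]$.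
   Context: The binary matrix $H$ associated with $\mathbf{H}(X)$ is obtained by replacing each entry $h_{j,l}(X) = \sum_{s=0}^{r-1} c_s X^s$ by the $r \times r$ binary circulant matrix whose first row is $(c_0, \ldots, c_{r-1})$ (each subsequent row being the cyclic right shift by one of the previous row). $C(H)$ denotes the binary linear code that is the null space of $H$. The code $C(H)$ is called dual-containing if $C(H)^\perp \subseteq C(H)$, equivalently $H H^T = 0$ over $\mathbb{F}_2$. A multiset is multiplicity even if every element occurs an even number of times (the empty multiset is multiplicity even). $[J] = \{1, \ldots, J\}$. *)

theory Defs
  imports Main "HOL-Library.Multiset"
begin

text \<open>Binary vectors of length n are functions nat => bool vanishing outside {0..<n};
  True represents 1 in F_2. Indices are 0-based: [J] is rendered as {0..<J}.\<close>

definition bvecs :: "nat \<Rightarrow> (nat \<Rightarrow> bool) set" where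
  "bvecs n = {x. \<forall>i. n \<le> i \<longrightarrow> \<not> x i}"

definition binner_zero :: "nat \<Rightarrow> (nat \<Rightarrow> bool) \<Rightarrow> (nat \<Rightarrow> bool) \<Rightarrow> bool" where
  "binner_zero n x y \<longleftrightarrow> even (card {i. i < n \<and> x i \<and> y i})"

text \<open>Null space C(H) of an m x n binary matrix H (H p k for row p, column k).\<close>
definition null_code :: "nat \<Rightarrow> nat \<Rightarrow> (nat \<Rightarrow> nat \<Rightarrow> bool) \<Rightarrow> (nat \<Rightarrow> bool) set" where
  "null_code m n H = {x \<in> bvecs n. \<forall>p<m. binner_zero n (H p) x}"

definition dual_code :: "nat \<Rightarrow> (nat \<Rightarrow> bool) set \<Rightarrow> (nat \<Rightarrow> bool) set" where
  "dual_code n C = {y \<in> bvecs n. \<forall>x\<in>C. binner_zero n x y}"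

definition dual_containing :: "nat \<Rightarrow> nat \<Rightarrow> (nat \<Rightarrow> nat \<Rightarrow> bool) \<Rightarrow> bool" where
  "dual_containing m n H \<longleftrightarrow> dual_code n (null_code m n H) \<subseteq> null_code m n H"

text \<open>Entries h j l of the polynomial matrix are given by coefficient functions:
  h j l s is the coefficient of X^s (s < r). The associated binary matrix replaces
  each entry by the r x r circulant whose row a, column b entry is c_((b - a) mod r).\<close>
definition assoc_matrix :: "nat \<Rightarrow> (nat \<Rightarrow> nat \<Rightarrow> nat \<Rightarrow> bool) \<Rightarrow> nat \<Rightarrow> nat \<Rightarrow> bool" where
  "assoc_matrix r h p k = h (p div r) (k div r) ((k mod r + r - p mod r) mod r)"

definition exps :: "nat \<Rightarrow> (nat \<Rightarrow> nat \<Rightarrow> nat \<Rightarrow> bool) \<Rightarrow> nat \<Rightarrow> nat \<Rightarrow> nat set" where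
  "exps r h j l = {s. s < r \<and> h j l s}"

definition dmset :: "nat \<Rightarrow> nat \<Rightarrow> (nat \<Rightarrow> nat \<Rightarrow> nat \<Rightarrow> bool) \<Rightarrow> nat \<Rightarrow> nat \<Rightarrow> nat multiset" where
  "dmset r L h i j = image_mset (\<lambda>(l, e, e'). (e + r - e') mod r)
     (mset_set {(l, e, e'). l < L \<and> e \<in> exps r h i l \<and> e' \<in> exps r h j l})"

definition multiplicity_even :: "'a multiset \<Rightarrow> bool" where
  "multiplicity_even M \<longleftrightarrow> (\<forall>x. even (count M x))"

end

theory Submission
  imports Defs
begin

text \<open>
  Two rows of a binary matrix are orthogonal iff they share an even number of 1-positions, and
  C(H) is dual-containing iff all rows of H are pairwise orthogonal. For rows a of block row i
  and c of block row j of the circulant matrix, a column k = l r + b is a common 1-position iff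
  (b - a) mod r is an exponent e of h_il and (b - c) mod r is an exponent e' of h_jl; the map
  k \<mapsto> (l, e, e') is a bijection onto the triples of d_ij with e - e' \<equiv> c - a (mod r). So the
  overlap of the two rows is exactly the multiplicity of (c - a) mod r in d_ij.
\<close>

lemma count_image_mset_mset_set:
  "finite S \<Longrightarrow> count (image_mset f (mset_set S)) x = card {s \<in> S. f s = x}"
  by (simp add: count_image_mset' Collect_conj_eq eq_commute)

lemma binner_zero_commute: "binner_zero n x y \<longleftrightarrow> binner_zero n y x"
  unfolding binner_zero_def by (simp add: conj_commute conj_left_commute)

text \<open>Rows of H need not vanish beyond column n, so they are truncated to become codewords.\<close>

definition truncate_bvec :: "nat \<Rightarrow> (nat \<Rightarrow> bool) \<Rightarrow> nat \<Rightarrow> bool" where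
  "truncate_bvec n x = (\<lambda>k. k < n \<and> x k)"

lemma truncate_bvec_in_bvecs: "truncate_bvec n x \<in> bvecs n"
  unfolding truncate_bvec_def bvecs_def by auto

lemma binner_zero_truncate_bvec: "binner_zero n (truncate_bvec n x) y \<longleftrightarrow> binner_zero n x y"
  unfolding binner_zero_def truncate_bvec_def by simp

lemma truncate_row_in_null_code_iff:
  "truncate_bvec n (H p) \<in> null_code m n H \<longleftrightarrow> (\<forall>q<m. binner_zero n (H p) (H q))"
  unfolding null_code_def
  using truncate_bvec_in_bvecs binner_zero_truncate_bvec binner_zero_commute by blast

lemma truncate_row_in_dual_code:
  assumes "p < m"
  shows "truncate_bvec n (H p) \<in> dual_code n (null_code m n H)"
  using assms truncate_bvec_in_bvecs binner_zero_truncate_bvec binner_zero_commute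
  unfolding dual_code_def null_code_def by blast

lemma dual_containing_iff_rows_orthogonal:
  "dual_containing m n H \<longleftrightarrow> (\<forall>p<m. \<forall>q<m. binner_zero n (H p) (H q))"
proof
  assume "dual_containing m n H"
  then have "truncate_bvec n (H p) \<in> null_code m n H" if "p < m" for p
    using truncate_row_in_dual_code[OF that] unfolding dual_containing_def by blast
  then show "\<forall>p<m. \<forall>q<m. binner_zero n (H p) (H q)"
    using truncate_row_in_null_code_iff by blast
next
  assume "\<forall>p<m. \<forall>q<m. binner_zero n (H p) (H q)"
  then have rows: "truncate_bvec n (H p) \<in> null_code m n H" if "p < m" for p
    using that truncate_row_in_null_code_iff by blast
  show "dual_containing m n H"
    unfolding dual_containing_def
  proof
    fix y assume y: "y \<in> dual_code n (null_code m n H)"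
    then have "binner_zero n (H p) y" if "p < m" for p
      using rows[OF that] binner_zero_truncate_bvec unfolding dual_code_def by blast
    with y show "y \<in> null_code m n H" unfolding dual_code_def null_code_def by blast
  qed
qed

lemma int_mod_add_diff:
  fixes a b r :: nat
  assumes "b \<le> r"
  shows "int ((a + r - b) mod r) = (int a - int b) mod int r"
proof -
  have "int (a + r - b) = (int a - int b) + int r" using assms by simp
  then show ?thesis by (simp add: zmod_int)
qed

lemma cyclic_diff_right_inj:
  fixes x y a r :: nat
  assumes "x < r" "y < r" "a \<le> r" "(x + r - a) mod r = (y + r - a) mod r"
  shows "x = y"
proof -
  have "(int x - int a) mod int r = (int y - int a) mod int r"
    using assms by (metis int_mod_add_diff)
  then have "int x mod int r = int y mod int r"
    by (metis diff_add_cancel mod_add_left_eq)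
  then show ?thesis using assms by simp
qed

lemma cyclic_diff_left_inj:
  fixes x y e r :: nat
  assumes "x < r" "y < r" "(e + r - x) mod r = (e + r - y) mod r"
  shows "x = y"
proof -
  have "(int e - int x) mod int r = (int e - int y) mod int r"
    using assms by (metis int_mod_add_diff less_imp_le)
  then have "int x mod int r = int y mod int r"
    by (metis diff_diff_eq2 diff_add_cancel mod_diff_left_eq mod_diff_right_eq add_diff_cancel_left')
  then show ?thesis using assms by simp
qed

lemma cyclic_diff_of_shifts:
  fixes a b c r :: nat
  assumes "a < r" "b < r" "c < r"
  shows "((b + r - a) mod r + r - (b + r - c) mod r) mod r = (c + r - a) mod r"
proof -
  have "int (((b + r - a) mod r + r - (b + r - c) mod r) mod r)
      = ((int b - int a) mod int r - (int b - int c) mod int r) mod int r"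
    using assms by (simp add: int_mod_add_diff)
  also have "\<dots> = (int c - int a) mod int r" by (simp add: mod_diff_eq)
  also have "\<dots> = int ((c + r - a) mod r)" using assms by (simp add: int_mod_add_diff)
  finally show ?thesis by simp
qed

lemma cyclic_diff_add_cancel:
  fixes a e r :: nat
  assumes "e < r" "a < r"
  shows "((e + a) mod r + r - a) mod r = e"
proof -
  have "int (((e + a) mod r + r - a) mod r) = (int ((e + a) mod r) - int a) mod int r"
    using assms by (simp add: int_mod_add_diff)
  also have "\<dots> = int e" using assms by (simp add: zmod_int mod_diff_left_eq)
  finally show ?thesis by simp
qed

lemma block_index_less:
  fixes l b L r :: nat
  assumes "l < L" "b < r"
  shows "l * r + b < L * r"
proof -
  have "l * r + b < Suc l * r" using assms(2) by simp
  also have "\<dots> \<le> L * r" using assms(1) by (intro mult_le_mono1) simp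
  finally show ?thesis .
qed

lemma card_common_ones_assoc_matrix:
  assumes "0 < r"
  shows "card {k. k < L * r \<and> assoc_matrix r h p k \<and> assoc_matrix r h q k}
       = count (dmset r L h (p div r) (q div r)) ((q mod r + r - p mod r) mod r)"
proof -
  define i where "i = p div r"
  define j where "j = q div r"
  define a where "a = p mod r"
  define c where "c = q mod r"
  define d where "d = (c + r - a) mod r"
  define S where "S = {(l, e, e'). l < L \<and> e \<in> exps r h i l \<and> e' \<in> exps r h j l}"
  define f where "f = (\<lambda>(l::nat, e::nat, e'::nat). (e + r - e') mod r)"
  define K where "K = {k. k < L * r \<and> assoc_matrix r h p k \<and> assoc_matrix r h q k}"
  define g where "g = (\<lambda>k. (k div r, (k mod r + r - a) mod r, (k mod r + r - c) mod r))"
  have ac: "a < r" "c < r" using assms by (auto simp: a_def c_def)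
  have "inj_on g K"
  proof
    fix k1 k2 assume "g k1 = g k2"
    then have div_eq: "k1 div r = k2 div r"
      and shift_eq: "(k1 mod r + r - a) mod r = (k2 mod r + r - a) mod r"
      by (auto simp: g_def)
    have "k1 mod r = k2 mod r"
      using cyclic_diff_right_inj[of "k1 mod r" r "k2 mod r" a] ac assms shift_eq by simp
    with div_eq show "k1 = k2" by (metis div_mult_mod_eq)
  qed
  moreover have "g ` K = {s \<in> S. f s = d}"
  proof (intro equalityI subsetI)
    fix s assume "s \<in> g ` K"
    then obtain k where k: "k \<in> K" and s: "s = g k" by blast
    have "k div r < L" using k by (simp add: K_def less_mult_imp_div_less)
    moreover have "k mod r < r" using assms by simp
    ultimately show "s \<in> {s \<in> S. f s = d}"
      using k cyclic_diff_of_shifts[OF ac(1) _ ac(2)]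
      by (auto simp: s g_def S_def f_def d_def K_def exps_def assoc_matrix_def i_def j_def a_def c_def)
  next
    fix s assume "s \<in> {s \<in> S. f s = d}"
    then obtain l e e' where s: "s = (l, e, e')" and l: "l < L"
      and e: "e < r" "h i l e" and e': "e' < r" "h j l e'" and diff: "(e + r - e') mod r = d"
      by (auto simp: S_def f_def exps_def)
    define b where "b = (e + a) mod r"
    have b: "b < r" using assms by (simp add: b_def)
    have ea: "(b + r - a) mod r = e"
      using cyclic_diff_add_cancel[OF e(1) ac(1)] by (simp add: b_def)
    have "(e + r - (b + r - c) mod r) mod r = (e + r - e') mod r"
      using cyclic_diff_of_shifts[OF ac(1) b ac(2)] diff by (simp add: ea d_def)
    then have ec: "(b + r - c) mod r = e'"
      using cyclic_diff_left_inj[of "(b + r - c) mod r" r e' e] assms e' by simp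
    have "l * r + b < L * r" using l b by (rule block_index_less)
    then have "l * r + b \<in> K"
      using b e e' ea ec
      by (simp add: K_def assoc_matrix_def i_def j_def a_def c_def)
    moreover have "g (l * r + b) = s" using b ea ec by (simp add: g_def s)
    ultimately show "s \<in> g ` K" by blast
  qed
  moreover have "finite S"
    by (rule finite_subset[of _ "{..<L} \<times> {..<r} \<times> {..<r}"]) (auto simp: S_def exps_def)
  ultimately have "card K = count (image_mset f (mset_set S)) d"
    by (metis card_image count_image_mset_mset_set)
  then show ?thesis by (simp add: K_def dmset_def S_def f_def d_def i_def j_def a_def c_def)
qed

lemma in_dmset_less:
  assumes "0 < r" "x \<in># dmset r L h i j"
  shows "x < r"
  using assms by (auto simp: dmset_def)

theorem theorem10:
  fixes r J L :: nat and h :: "nat \<Rightarrow> nat \<Rightarrow> nat \<Rightarrow> bool"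
  assumes "r \<ge> 1" and "J \<ge> 1" and "L \<ge> 1"
    and entries: "\<forall>j<J. \<forall>l<L.
        (\<forall>s<r. \<not> h j l s)
      \<or> (\<exists>a<r. \<forall>s<r. h j l s \<longleftrightarrow> s = a)
      \<or> (\<exists>a<r. \<exists>b<r. a \<noteq> b \<and> (\<forall>s<r. h j l s \<longleftrightarrow> s = a \<or> s = b))"
    and col_weight: "\<exists>w. \<forall>k<L * r. card {p. p < J * r \<and> assoc_matrix r h p k} = w"
    and row_weight: "\<exists>w. \<forall>p<J * r. card {k. k < L * r \<and> assoc_matrix r h p k} = w"
  shows "dual_containing (J * r) (L * r) (assoc_matrix r h) \<longleftrightarrow>
         (\<forall>i<J. \<forall>j<J. multiplicity_even (dmset r L h i j))"
proof -
  have r: "0 < r" using \<open>r \<ge> 1\<close> by simp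
  have rows: "binner_zero (L * r) (assoc_matrix r h p) (assoc_matrix r h q) \<longleftrightarrow>
      even (count (dmset r L h (p div r) (q div r)) ((q mod r + r - p mod r) mod r))" for p q
    using card_common_ones_assoc_matrix[OF r] by (simp add: binner_zero_def)
  show ?thesis
    unfolding dual_containing_iff_rows_orthogonal multiplicity_even_def
  proof (intro iffI allI impI)
    fix i j x
    assume orth: "\<forall>p<J * r. \<forall>q<J * r. binner_zero (L * r) (assoc_matrix r h p) (assoc_matrix r h q)"
      and "i < J" "j < J"
    show "even (count (dmset r L h i j) x)"
    proof (cases "x < r")
      case True
      have "i * r < J * r" "j * r + x < J * r"
        using \<open>i < J\<close> \<open>j < J\<close> True r by (simp_all add: block_index_less)
      then show ?thesis using orth rows[of "i * r" "j * r + x"] True r by simp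
    next
      case False
      then have "x \<notin># dmset r L h i j" using in_dmset_less[OF r] by blast
      then show ?thesis by (simp add: not_in_iff)
    qed
  next
    fix p q
    assume "\<forall>i<J. \<forall>j<J. \<forall>x. even (count (dmset r L h i j) x)" "p < J * r" "q < J * r"
    then show "binner_zero (L * r) (assoc_matrix r h p) (assoc_matrix r h q)"
      using rows by (simp add: less_mult_imp_div_less)
  qed
qed

end
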